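(* Let $\mathbb{R}_0=\{x\in\mathbb{R}: x\ge 0\}$ and let $\widetilde{U}:\mathbb{R}_0\to\mathbb{R}_0$ be defined by \[ \widetilde{U}(x)=\begin{cases} \dfrac{3x+1}{2} & \text{if } \lfloor x\rfloor \text{ is even},\\[4pt] \dfrac{x}{2} & \text{if } \lfloor x\rfloor \text{ is odd}.\end{cases}\] Then there are no $\widetilde{U}$-cycles: there is no $x\in\mathbb{R}_0$ and no integer $k\ge 1$ with $\widetilde{U}^k(x)=x$.
   Context: $\lfloor x\rfloor$ denotes the largest integer $\le x$. For a function $f:X\to X$, $f^0$ is the identity and $f^i=f\circ f^{i-1}$. An $f$-cycle is the trajectory of a point $z$ with $f^n(z)=z$ for some $n\ge 1$. *)

theory Defs
  imports Complex_Main
begin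

definition Ut :: "real \<Rightarrow> real" where
  "Ut x = (if even \<lfloor>x\<rfloor> then (3 * x + 1) / 2 else x / 2)"

end

theory Submission
  imports Defs
begin

text \<open>Each step of \<open>Ut\<close> multiplies \<open>x\<close> by at least \<open>c\<close> and the distance \<open>1 - frac x\<close>
  from \<open>x\<close> up to the next integer by at most \<open>c\<close>, where \<open>c\<close> is \<open>3/2\<close> or \<open>1/2\<close>.
  Along \<open>k\<close> steps the factors multiply to some \<open>p = 3^a / 2^k\<close>. On a cycle through
  \<open>x > 0\<close> the first bound gives \<open>p \<le> 1\<close> and the second (the distance is positive)
  gives \<open>p \<ge> 1\<close>; but \<open>3^a = 2^k\<close> is impossible for \<open>k \<ge> 1\<close>.\<close>

lemma Ut_step_factor:
  "\<exists>m::nat. m \<le> 1 \<and> (3^m / 2) * y \<le> Ut y \<and> 1 - frac (Ut y) \<le> (3^m / 2) * (1 - frac y)"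
proof (cases "even \<lfloor>y\<rfloor>")
  case True
  then obtain n where n: "\<lfloor>y\<rfloor> = 2 * n" by (auto elim: evenE)
  have U: "Ut y = (3 * y + 1) / 2" using True by (simp add: Ut_def)
  have "\<lfloor>Ut y\<rfloor> \<le> 3 * n + 1"
    using n U by (simp add: floor_le_iff) linarith
  then have "real_of_int \<lfloor>Ut y\<rfloor> \<le> 3 * real_of_int n + 1"
    by linarith
  moreover have "2 * Ut y = 3 * y + 1" using U by simp
  ultimately have "1 - frac (Ut y) \<le> (3 / 2) * (1 - frac y)"
    unfolding frac_def n of_int_mult of_int_numeral by argo
  moreover have "(3 / 2) * y \<le> Ut y" using U by simp
  ultimately show ?thesis by (intro exI[of _ 1]) simp
next
  case False
  then obtain n where n: "\<lfloor>y\<rfloor> = 2 * n + 1" by (meson oddE)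
  have U: "Ut y = y / 2" using False by (simp add: Ut_def)
  have "\<lfloor>y / 2\<rfloor> = n"
    using n by (simp add: floor_eq_iff)
  then have "1 - frac (Ut y) = (1 / 2) * (1 - frac y)"
    unfolding frac_def U n by (simp add: field_simps)
  moreover have "(1 / 2) * y \<le> Ut y" using U by simp
  ultimately show ?thesis by (intro exI[of _ 0]) simp
qed

lemma Ut_funpow_factor:
  "\<exists>a::nat. (3^a / 2^k) * x \<le> (Ut ^^ k) x \<and>
     1 - frac ((Ut ^^ k) x) \<le> (3^a / 2^k) * (1 - frac x)"
proof (induction k)
  case 0
  show ?case by (intro exI[of _ 0]) simp
next
  case (Suc k)
  then obtain a :: nat where
    lower: "(3^a / 2^k) * x \<le> (Ut ^^ k) x" and
    upper: "1 - frac ((Ut ^^ k) x) \<le> (3^a / 2^k) * (1 - frac x)"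
    by blast
  obtain m :: nat where
    step_lower: "(3^m / 2) * (Ut ^^ k) x \<le> (Ut ^^ Suc k) x" and
    step_upper: "1 - frac ((Ut ^^ Suc k) x) \<le> (3^m / 2) * (1 - frac ((Ut ^^ k) x))"
    using Ut_step_factor[of "(Ut ^^ k) x"] by auto
  have factor: "(3::real)^(a + m) / 2^Suc k = (3^m / 2) * (3^a / 2^k)"
    by (simp add: power_add)
  have "(3^(a + m) / 2^Suc k) * x \<le> (3^m / 2) * (Ut ^^ k) x"
    unfolding factor mult.assoc by (rule mult_left_mono[OF lower]) simp
  moreover have "(3^m / 2) * (1 - frac ((Ut ^^ k) x)) \<le> (3^(a + m) / 2^Suc k) * (1 - frac x)"
    unfolding factor mult.assoc by (rule mult_left_mono[OF upper]) simp
  ultimately show ?case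
    using step_lower step_upper by (intro exI[of _ "a + m"]) simp
qed

lemma Ut_pos: "0 \<le> y \<Longrightarrow> 0 < Ut y"
  unfolding Ut_def by (cases "y = 0") auto

lemma Ut_funpow_pos:
  assumes "0 \<le> x" "k \<ge> 1"
  shows "0 < (Ut ^^ k) x"
proof -
  have "0 \<le> (Ut ^^ j) x" for j
    using assms(1) Ut_pos by (induction j) (auto intro: less_imp_le)
  moreover obtain j where "k = Suc j" using assms(2) by (cases k) auto
  ultimately show ?thesis using Ut_pos by simp
qed

lemma power_3_neq_power_2: "k \<ge> 1 \<Longrightarrow> (3::real)^a \<noteq> 2^k"
proof
  assume "k \<ge> 1" "(3::real)^a = 2^k"
  then have "(3::nat)^a = 2^k"
    by (metis of_nat_eq_iff of_nat_numeral of_nat_power)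
  moreover have "even ((2::nat)^k)" using \<open>k \<ge> 1\<close> by simp
  moreover have "odd ((3::nat)^a)" by simp
  ultimately show False by metis
qed

theorem theorem2:
  shows "\<not> (\<exists>x::real. \<exists>k::nat. x \<ge> 0 \<and> k \<ge> 1 \<and> (Ut ^^ k) x = x)"
proof
  assume "\<exists>x::real. \<exists>k::nat. x \<ge> 0 \<and> k \<ge> 1 \<and> (Ut ^^ k) x = x"
  then obtain x :: real and k :: nat where x: "x \<ge> 0" and k: "k \<ge> 1" and cycle: "(Ut ^^ k) x = x"
    by blast
  obtain a :: nat where "(3^a / 2^k) * x \<le> x" and "1 - frac x \<le> (3^a / 2^k) * (1 - frac x)"
    using Ut_funpow_factor[of k x] cycle by auto
  moreover have "0 < x" using Ut_funpow_pos[OF x k] cycle by simp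
  moreover have "0 < 1 - frac x" using frac_lt_1[of x] by simp
  ultimately have "(3::real)^a / 2^k = 1"
    by (metis antisym mult_le_cancel_right1 mult_le_cancel_right2)
  then have "(3::real)^a = 2^k" by simp
  then show False using power_3_neq_power_2[OF k] by blast
qed

end
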